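(* Let $g$ be a continuous probability density on $\mathbb{R}$ whose support is contained in $(1,3)$, and let $\bar\lambda=\int_0^4 \lambda\, g(\lambda)\,d\lambda$. Let $\mu^*$ be an invariant probability measure on $[0,1]$ of the Perron–Frobenius operator $P^*$ associated with $g$, i.e. $P^*\mu^*=\mu^*$. Then $$E_{\mu^*}[X]=\int_0^1 x\,d\mu^*(x) \;<\; \frac{\bar\lambda-1}{\bar\lambda},$$ where $\frac{\bar\lambda-1}{\bar\lambda}$ is the non-zero (attracting) fixed point of the deterministic logistic map $S_{\bar\lambda}$.
   Context: For $\lambda\in[0,4]$ let $S_\lambda(x)=\lambda x(1-x)$ on $[0,1]$. The stochastic logistic map is the Markov chain $X_{n+1}=\lambda_{n+1}X_n(1-X_n)$, where $\lambda_1,\lambda_2,\dots$ are i.i.d. with density $g$ supported in $[0,4]$ and independent of $X_0$. For a Borel probability measure $\mu$ on $[0,1]$, the Perron–Frobenius operator is $P^*\mu(A)=\int_0^4 \mu\big(S_\lambda^{-1}(A)\big)\,g(\lambda)\,d\lambda$ for Borel $A\subseteq[0,1]$. A probability measure $\mu^*$ is invariant if $P^*\mu^*=\mu^*$. *)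

theory Defs
  imports "HOL-Probability.Probability"
begin

definition logistic :: "real \<Rightarrow> real \<Rightarrow> real" where
  "logistic l x = l * x * (1 - x)"

definition PF_op :: "(real \<Rightarrow> real) \<Rightarrow> real measure \<Rightarrow> real set \<Rightarrow> real" where
  "PF_op g \<mu> A = (LINT l:{0..4}|lborel. measure \<mu> {x\<in>{0..1}. logistic l x \<in> A} * g l)"

definition PF_invariant :: "(real \<Rightarrow> real) \<Rightarrow> real measure \<Rightarrow> bool" where
  "PF_invariant g \<mu> \<longleftrightarrow>
     prob_space \<mu> \<and> sets \<mu> = sets (restrict_space borel {0..1}) \<and>
     (\<forall>A \<in> sets (restrict_space borel {0..1}). PF_op g \<mu> A = measure \<mu> A)"

end

theory Submission
  imports Defs
begin

text \<open>Invariance says that \<open>\<mu>\<close> is the mixture over \<open>\<lambda> \<sim> g\<close> of the push-forwards of \<open>\<mu>\<close>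
  under \<open>S\<^sub>\<lambda>\<close>. Integrating \<open>x\<close> gives \<open>m = \<lambda>\<^sub>0 (m - s)\<close> for the first two moments
  \<open>m, s\<close> of \<open>\<mu>\<close> and the mean \<open>\<lambda>\<^sub>0 > 1\<close> of \<open>g\<close>. Since \<open>m\<^sup>2 \<le> s\<close>, a positive \<open>m\<close>
  satisfies \<open>1 \<le> \<lambda>\<^sub>0 (1 - m)\<close>, i.e. \<open>m \<le> (\<lambda>\<^sub>0 - 1) / \<lambda>\<^sub>0\<close>. Equality would force zero
  variance, so \<open>\<mu>\<close> would be the point mass at \<open>m \<in> (0,1)\<close>; but \<open>S\<^sub>\<lambda>\<close> fixes \<open>m\<close> only
  for the single value \<open>\<lambda> = 1 / (1 - m)\<close>, which has probability zero under \<open>g\<close>, so such a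
  point mass is not invariant.\<close>

lemma logistic_in_unit_interval:
  assumes "0 \<le> l" "l \<le> 4" "x \<in> {0..1}"
  shows "logistic l x \<in> {0..1}"
proof -
  have "x * (1 - x) \<le> 1/4"
    using zero_le_power2[of "x - 1/2"] by (simp add: algebra_simps power2_eq_square)
  moreover have "0 \<le> x * (1 - x)" using assms by simp
  ultimately have "l * (x * (1 - x)) \<le> 4 * (1/4)" using assms by (intro mult_mono) auto
  with assms \<open>0 \<le> x * (1 - x)\<close> show ?thesis by (simp add: logistic_def mult.assoc)
qed

lemma measurable_logistic:
  "case_prod logistic \<in> measurable
     (restrict_space borel {0..4} \<Otimes>\<^sub>M restrict_space borel {0..1}) (restrict_space borel {0..1})"
proof (rule measurable_restrict_space2)
  show "case_prod logistic \<in> space (restrict_space borel {0..4} \<Otimes>\<^sub>M restrict_space borel {0..1}) \<rightarrow> {0..1}"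
    using logistic_in_unit_interval by (auto simp: space_pair_measure space_restrict_space)
  have [measurable]: "(\<lambda>x::real. x) \<in> borel_measurable (restrict_space borel A)" for A
    by (rule measurable_restrict_space1) simp
  show "case_prod logistic \<in> borel_measurable (restrict_space borel {0..4} \<Otimes>\<^sub>M restrict_space borel {0..1})"
    unfolding logistic_def by measurable
qed

lemma PF_invariantD:
  assumes "PF_invariant g \<mu>"
  shows "prob_space \<mu>" "sets \<mu> = sets (restrict_space borel {0..1})" "space \<mu> = {0..1}"
  using assms sets_eq_imp_space_eq[of \<mu> "restrict_space borel {0..1}"]
  by (auto simp: PF_invariant_def space_restrict_space)

lemma integrable_PF_invariant:
  fixes f :: "real \<Rightarrow> real"
  assumes "PF_invariant g \<mu>" "f \<in> borel_measurable borel" "\<And>x. x \<in> {0..1} \<Longrightarrow> \<bar>f x\<bar> \<le> 1"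
  shows "integrable \<mu> f"
proof (rule finite_measure.integrable_const_bound[where B=1])
  note \<mu> = PF_invariantD[OF assms(1)]
  show "finite_measure \<mu>" by (rule prob_space.finite_measure[OF \<mu>(1)])
  show "AE x in \<mu>. norm (f x) \<le> 1"
    using \<mu>(3) assms(3) by (intro AE_I2) simp
  show "f \<in> borel_measurable \<mu>"
    unfolding measurable_cong_sets[OF \<mu>(2) refl] by (rule measurable_restrict_space1[OF assms(2)])
qed

definition noise_measure :: "(real \<Rightarrow> real) \<Rightarrow> real measure" where
  "noise_measure g = density (restrict_space lborel {0..4}) g"

lemma sets_noise_measure [measurable_cong, simp]:
  "sets (noise_measure g) = sets (restrict_space borel {0..4})"
  by (simp add: noise_measure_def sets_restrict_space)

lemma space_noise_measure [simp]: "space (noise_measure g) = {0..4}"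
  by (simp add: noise_measure_def space_restrict_space)

lemma prob_space_noise_measure:
  assumes "integrable lborel g" "\<And>l. 0 \<le> g l" "(\<integral>l. g l \<partial>lborel) = 1"
    and "\<And>l. l \<notin> {0..4} \<Longrightarrow> g l = 0"
  shows "prob_space (noise_measure g)"
proof (rule prob_spaceI)
  have "emeasure (noise_measure g) {0..4} = (\<integral>\<^sup>+l. ennreal (g l) * indicator {0..4} l \<partial>lborel)"
    using borel_measurable_integrable[OF assms(1)] unfolding noise_measure_def
    by (subst emeasure_density)
       (auto simp: measurable_restrict_space1 sets_restrict_space_iff nn_integral_restrict_space
             intro!: nn_integral_cong split: split_indicator)
  also have "\<dots> = (\<integral>\<^sup>+l. ennreal (g l) \<partial>lborel)"
    using assms(4) by (intro nn_integral_cong) (auto split: split_indicator)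
  also have "\<dots> = 1"
    using assms(1-3) by (simp add: nn_integral_eq_integral)
  finally show "emeasure (noise_measure g) (space (noise_measure g)) = 1" by simp
qed

definition logistic_kernel :: "real measure \<Rightarrow> real \<Rightarrow> real measure" where
  "logistic_kernel \<mu> l = distr \<mu> (restrict_space borel {0..1}) (logistic l)"

lemma measurable_logistic_kernel:
  assumes "subprob_space \<mu>" "sets \<mu> = sets (restrict_space borel {0..1})"
  shows "logistic_kernel \<mu> \<in>
           measurable (restrict_space borel {0..4}) (subprob_algebra (restrict_space borel {0..1}))"
  unfolding logistic_kernel_def
proof (rule measurable_distr2[OF measurable_logistic])
  show "(\<lambda>_. \<mu>) \<in> measurable (restrict_space borel {0..4}) (subprob_algebra (restrict_space borel {0..1}))"
    using assms by (intro measurable_const) (simp add: space_subprob_algebra)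
qed

lemma measurable_logistic_fixed:
  assumes "sets M = sets (restrict_space borel {0..1})" "l \<in> {0..4}"
  shows "logistic l \<in> measurable M (restrict_space borel {0..1})"
  unfolding measurable_cong_sets[OF assms(1) refl]
  using measurable_Pair2[OF measurable_logistic, of l] assms(2) by (simp add: space_restrict_space)

lemma emeasure_logistic_kernel:
  assumes "prob_space \<mu>" "sets \<mu> = sets (restrict_space borel {0..1})"
    and "l \<in> {0..4}" "A \<in> sets (restrict_space borel {0..1})"
  shows "emeasure (logistic_kernel \<mu> l) A = measure \<mu> {x\<in>{0..1}. logistic l x \<in> A}"
proof -
  have "space \<mu> = {0..1}"
    using sets_eq_imp_space_eq[OF assms(2)] by (simp add: space_restrict_space)
  then show ?thesis
    using assms(1,4) measurable_logistic_fixed[OF assms(2,3)] unfolding logistic_kernel_def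
    by (simp add: emeasure_distr finite_measure.emeasure_eq_measure prob_space.finite_measure
        vimage_def Int_def conj_commute)
qed

lemma measurable_measure_logistic_preimage:
  assumes "prob_space \<mu>" "sets \<mu> = sets (restrict_space borel {0..1})"
    and "A \<in> sets (restrict_space borel {0..1})"
  shows "(\<lambda>l. measure \<mu> {x\<in>{0..1}. logistic l x \<in> A}) \<in> borel_measurable (restrict_space borel {0..4})"
proof -
  have "(\<lambda>l. enn2real (emeasure (logistic_kernel \<mu> l) A)) \<in> borel_measurable (restrict_space borel {0..4})"
    using measurable_logistic_kernel[OF prob_space_imp_subprob_space[OF assms(1)] assms(2)]
    by (intro borel_measurable_enn2real measurable_compose[OF _ measurable_emeasure_subprob_algebra[OF assms(3)]])
  then show ?thesis
    by (rule measurable_cong[THEN iffD1, rotated])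
       (simp add: emeasure_logistic_kernel[OF assms(1,2) _ assms(3)] space_restrict_space)
qed

lemma (in prob_space) AE_eq_expectation_if_second_moment:
  fixes X :: "'a \<Rightarrow> real"
  assumes "integrable M X" "integrable M (\<lambda>x. (X x)\<^sup>2)"
    and "expectation (\<lambda>x. (X x)\<^sup>2) = (expectation X)\<^sup>2"
  shows "AE x in M. X x = expectation X"
proof -
  have "integrable M (\<lambda>x. (X x - expectation X)\<^sup>2)"
    using assms(1,2) by (simp add: power2_diff)
  moreover have "variance X = 0"
    using variance_eq[OF assms(1,2)] assms(3) by simp
  ultimately have "AE x in M. (X x - expectation X)\<^sup>2 = 0"
    by (subst integral_nonneg_eq_0_iff_AE[symmetric]) auto
  then show ?thesis by eventually_elim simp
qed

lemma moment_equation_bound: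
  fixes l m s :: real
  assumes "1 < l" "m = l * (m - s)" "m\<^sup>2 \<le> s" "(l - 1) / l \<le> m"
  shows "m = (l - 1) / l" "s = m\<^sup>2"
proof -
  have "0 < (l - 1) / l"
    using assms(1) by simp
  with assms(4) have "0 < m"
    by linarith
  have "l * m\<^sup>2 \<le> l * s"
    using assms(1,3) by (intro mult_left_mono) auto
  then have "m * 1 \<le> m * (l - l * m)"
    using assms(2) by (simp add: algebra_simps power2_eq_square)
  then have "1 \<le> l - l * m"
    using \<open>0 < m\<close> by (simp only: mult_le_cancel_left_pos)
  then have "m \<le> (l - 1) / l"
    using assms(1) by (simp add: field_simps)
  then show m: "m = (l - 1) / l"
    using assms(4) by simp
  then have "l * m = l - 1"
    using assms(1) by (simp add: field_simps)
  have "l * s = m * (l - 1)"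
    using assms(2) by (simp add: algebra_simps)
  also have "\<dots> = m * (l * m)"
    using \<open>l * m = l - 1\<close> by simp
  finally have "l * s = l * m\<^sup>2"
    by (simp add: power2_eq_square ac_simps)
  then show "s = m\<^sup>2"
    using assms(1) by simp
qed

locale logistic_noise =
  fixes g :: "real \<Rightarrow> real"
  assumes borel_measurable_density [measurable]: "g \<in> borel_measurable borel"
    and density_nonneg: "\<And>l. 0 \<le> g l"
    and prob_space_noise: "prob_space (noise_measure g)"
begin

sublocale noise: prob_space "noise_measure g"
  by (rule prob_space_noise)

lemma integral_noise_measure:
  fixes h :: "real \<Rightarrow> real"
  assumes "h \<in> borel_measurable (noise_measure g)"
  shows "(LINT l:{0..4}|lborel. h l * g l) = (\<integral>l. h l \<partial>noise_measure g)"
proof -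
  have g: "g \<in> borel_measurable (restrict_space lborel {0..4})"
    by (simp add: measurable_restrict_space1)
  have h: "h \<in> borel_measurable (restrict_space lborel {0..4})"
    using assms measurable_cong_sets[of "noise_measure g" "restrict_space lborel {0..4}"]
    by (simp add: noise_measure_def)
  have "(\<integral>l. h l \<partial>noise_measure g) = (\<integral>l. g l *\<^sub>R h l \<partial>restrict_space lborel {0..4})"
    unfolding noise_measure_def using density_nonneg by (intro integral_density[OF h g]) auto
  also have "\<dots> = (LINT l:{0..4}|lborel. g l * h l)"
    by (simp add: integral_restrict_space set_lebesgue_integral_def)
  finally show ?thesis by (simp add: mult.commute)
qed

lemma PF_op_eq_integral:
  assumes "prob_space \<mu>" "sets \<mu> = sets (restrict_space borel {0..1})"
    and "A \<in> sets (restrict_space borel {0..1})"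
  shows "PF_op g \<mu> A = (\<integral>l. measure \<mu> {x\<in>{0..1}. logistic l x \<in> A} \<partial>noise_measure g)"
  unfolding PF_op_def using measurable_measure_logistic_preimage[OF assms]
  by (intro integral_noise_measure) simp

lemma measurable_noise_logistic_kernel:
  assumes "PF_invariant g \<mu>"
  shows "logistic_kernel \<mu> \<in> measurable (noise_measure g) (subprob_algebra (restrict_space borel {0..1}))"
  using measurable_logistic_kernel[OF prob_space_imp_subprob_space] PF_invariantD[OF assms] by simp

lemma PF_invariant_eq_bind:
  assumes "PF_invariant g \<mu>"
  shows "\<mu> = noise_measure g \<bind> logistic_kernel \<mu>"
proof (rule measure_eqI)
  note \<mu> = PF_invariantD[OF assms]
  show "sets \<mu> = sets (noise_measure g \<bind> logistic_kernel \<mu>)"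
    using sets_bind[OF _ noise.not_empty] \<mu>(2) unfolding logistic_kernel_def by simp
  fix A assume "A \<in> sets \<mu>"
  with \<mu>(2) have A: "A \<in> sets (restrict_space borel {0..1})" by simp
  let ?h = "\<lambda>l. measure \<mu> {x\<in>{0..1}. logistic l x \<in> A}"
  have "integrable (noise_measure g) ?h"
    using measurable_measure_logistic_preimage[OF \<mu>(1,2) A] prob_space.prob_le_1[OF \<mu>(1)]
    by (intro noise.integrable_const_bound[where B=1]) auto
  then have "emeasure \<mu> A = (\<integral>\<^sup>+l. ennreal (?h l) \<partial>noise_measure g)"
    using assms A PF_op_eq_integral[OF \<mu>(1,2) A]
    by (simp add: PF_invariant_def nn_integral_eq_integral finite_measure.emeasure_eq_measure
          prob_space.finite_measure[OF \<mu>(1)])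
  also have "\<dots> = (\<integral>\<^sup>+l. emeasure (logistic_kernel \<mu> l) A \<partial>noise_measure g)"
    by (intro nn_integral_cong) (simp add: emeasure_logistic_kernel[OF \<mu>(1,2) _ A])
  also have "\<dots> = emeasure (noise_measure g \<bind> logistic_kernel \<mu>) A"
    by (rule emeasure_bind[symmetric, OF noise.not_empty measurable_noise_logistic_kernel[OF assms] A])
  finally show "emeasure \<mu> A = emeasure (noise_measure g \<bind> logistic_kernel \<mu>) A" .
qed

lemma integrable_noise_identity: "integrable (noise_measure g) (\<lambda>l. l)"
proof (rule noise.integrable_const_bound[where B=4])
  show "AE l in noise_measure g. norm l \<le> 4"
    by (intro AE_I2) auto
  show "(\<lambda>l. l) \<in> borel_measurable (noise_measure g)"
    unfolding measurable_cong_sets[OF sets_noise_measure refl] by (simp add: measurable_restrict_space1)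
qed

lemma PF_invariant_mean:
  assumes "PF_invariant g \<mu>"
  shows "(\<integral>x. x \<partial>\<mu>) = (\<integral>l. l \<partial>noise_measure g) * (\<integral>x. x * (1 - x) \<partial>\<mu>)"
proof -
  note \<mu> = PF_invariantD[OF assms]
  interpret \<mu>: prob_space \<mu> by (rule \<mu>(1))
  have unit: "AE x in \<mu>. x \<in> {0..1}"
    using \<mu>(3) by (intro AE_I2) simp
  define c where "c = (\<integral>x. x * (1 - x) \<partial>\<mu>)"
  have c_nonneg: "0 \<le> c"
    unfolding c_def using unit by (intro integral_nonneg_AE) (auto elim: AE_mp)
  have kernel_mean: "(\<integral>\<^sup>+x. ennreal x \<partial>logistic_kernel \<mu> l) = ennreal (l * c)"
    if l: "l \<in> {0..4}" for l
  proof -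
    have "(\<integral>\<^sup>+x. ennreal x \<partial>logistic_kernel \<mu> l) = (\<integral>\<^sup>+x. ennreal (logistic l x) \<partial>\<mu>)"
      unfolding logistic_kernel_def using measurable_logistic_fixed[OF \<mu>(2) l]
      by (subst nn_integral_distr) (auto simp: measurable_restrict_space1)
    also have "\<dots> = ennreal (\<integral>x. logistic l x \<partial>\<mu>)"
      using unit logistic_in_unit_interval[of l] l
      by (intro nn_integral_eq_integral integrable_PF_invariant[OF assms]) (auto elim!: AE_mp simp: logistic_def)
    also have "(\<integral>x. logistic l x \<partial>\<mu>) = l * c"
      by (simp add: logistic_def c_def mult.assoc)
    finally show ?thesis .
  qed
  have "ennreal (\<integral>x. x \<partial>\<mu>) = (\<integral>\<^sup>+x. ennreal x \<partial>\<mu>)"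
    using unit by (intro nn_integral_eq_integral[symmetric] integrable_PF_invariant[OF assms]) (auto elim: AE_mp)
  also have "\<dots> = (\<integral>\<^sup>+l. \<integral>\<^sup>+x. ennreal x \<partial>logistic_kernel \<mu> l \<partial>noise_measure g)"
    by (subst PF_invariant_eq_bind[OF assms])
       (rule nn_integral_bind[OF _ measurable_noise_logistic_kernel[OF assms]], simp add: measurable_restrict_space1)
  also have "\<dots> = (\<integral>\<^sup>+l. ennreal (l * c) \<partial>noise_measure g)"
    by (intro nn_integral_cong) (simp add: kernel_mean)
  also have "\<dots> = ennreal ((\<integral>l. l \<partial>noise_measure g) * c)"
    using c_nonneg integrable_noise_identity by (subst nn_integral_eq_integral) auto
  finally show ?thesis
    unfolding c_def using unit c_nonneg
    by (subst (asm) ennreal_inj) (auto intro!: integral_nonneg_AE mult_nonneg_nonneg elim: AE_mp)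
qed

text \<open>The point mass at \<open>0\<close> is invariant, hence the restriction to \<open>p > 0\<close>.\<close>

lemma PF_invariant_no_point_mass:
  assumes "PF_invariant g \<mu>" "p \<in> {0<..<1}"
  shows "measure \<mu> {p} \<noteq> 1"
proof
  assume point_mass: "measure \<mu> {p} = 1"
  note \<mu> = PF_invariantD[OF assms(1)]
  interpret \<mu>: prob_space \<mu> by (rule \<mu>(1))
  have p: "{p} \<in> sets (restrict_space borel {0..1})"
    using assms(2) by (auto simp: sets_restrict_space_iff)
  have null: "measure \<mu> ({0..1} - {p}) = 0"
    using \<mu>.prob_compl[of "{p}"] p point_mass \<mu>(2,3) by simp
  \<comment> \<open>\<open>S\<^sub>l\<close> fixes \<open>p\<close> only for \<open>l = 1 / (1 - p)\<close>, a null set for the noise\<close>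
  have "AE l in noise_measure g. l \<noteq> 1 / (1 - p)"
    unfolding noise_measure_def
  proof (subst AE_density)
    show "AE l in restrict_space lborel {0..4}. 0 < ennreal (g l) \<longrightarrow> l \<noteq> 1 / (1 - p)"
      using AE_lborel_singleton[of "1 / (1 - p)"]
      by (subst AE_restrict_space_iff) (auto elim: AE_mp)
  qed (simp add: measurable_restrict_space1)
  then have "AE l in noise_measure g. measure \<mu> {x\<in>{0..1}. logistic l x \<in> {p}} = 0"
  proof eventually_elim
    fix l :: real assume l: "l \<noteq> 1 / (1 - p)"
    have "logistic l p \<noteq> p"
    proof
      assume "logistic l p = p"
      then have "p * (l * (1 - p)) = p * 1" by (simp add: logistic_def ac_simps)
      then have "l * (1 - p) = 1" using assms(2) by simp
      with l assms(2) show False by (simp add: field_simps)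
    qed
    then have "{x\<in>{0..1}. logistic l x \<in> {p}} \<subseteq> {0..1} - {p}" by auto
    then have "measure \<mu> {x\<in>{0..1}. logistic l x \<in> {p}} \<le> measure \<mu> ({0..1} - {p})"
      using sets.compl_sets[of "{p}" \<mu>] p \<mu>(2,3) by (intro \<mu>.finite_measure_mono) auto
    then show "measure \<mu> {x\<in>{0..1}. logistic l x \<in> {p}} = 0"
      using null measure_nonneg[of \<mu>] by (simp add: order_antisym)
  qed
  moreover have "(\<lambda>l. measure \<mu> {x\<in>{0..1}. logistic l x \<in> {p}}) \<in> borel_measurable (noise_measure g)"
    unfolding measurable_cong_sets[OF sets_noise_measure refl]
    by (rule measurable_measure_logistic_preimage[OF \<mu>(1,2) p])
  ultimately have "PF_op g \<mu> {p} = (\<integral>l. 0 \<partial>noise_measure g)"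
    unfolding PF_op_eq_integral[OF \<mu>(1,2) p] by (intro integral_cong_AE) simp_all
  with point_mass p assms(1) show False
    by (simp add: PF_invariant_def)
qed

lemma noise_mean_gt_1:
  assumes "\<And>l. g l \<noteq> 0 \<Longrightarrow> 1 < l"
  shows "1 < (\<integral>l. l \<partial>noise_measure g)"
proof (rule noise.expectation_greater[OF integrable_noise_identity])
  show "AE l in noise_measure g. 1 < l"
    unfolding noise_measure_def using assms
    by (subst AE_density) (auto intro!: AE_I2 simp: measurable_restrict_space1)
qed

lemma PF_invariant_mean_less:
  assumes "PF_invariant g \<mu>" and lam: "1 < (\<integral>l. l \<partial>noise_measure g)"
  shows "(\<integral>x. x \<partial>\<mu>) < ((\<integral>l. l \<partial>noise_measure g) - 1) / (\<integral>l. l \<partial>noise_measure g)"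
    (is "?m < (?lam - 1) / ?lam")
proof (rule ccontr)
  assume "\<not> ?m < (?lam - 1) / ?lam"
  interpret \<mu>: prob_space \<mu> by (rule PF_invariantD(1)[OF assms(1)])
  define s where "s = (\<integral>x. x\<^sup>2 \<partial>\<mu>)"
  have int_x: "integrable \<mu> (\<lambda>x. x)" and int_x2: "integrable \<mu> (\<lambda>x. x\<^sup>2)"
    by (auto intro!: integrable_PF_invariant[OF assms(1)] simp: abs_square_le_1)
  have "?m = ?lam * (?m - s)"
    using PF_invariant_mean[OF assms(1)] int_x int_x2
    by (simp add: s_def right_diff_distrib power2_eq_square)
  moreover have "?m\<^sup>2 \<le> s"
    using \<mu>.variance_positive[of "\<lambda>x. x"] \<mu>.variance_eq[OF int_x int_x2] by (simp add: s_def)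
  ultimately have m: "?m = (?lam - 1) / ?lam" and "s = ?m\<^sup>2"
    using moment_equation_bound[OF lam] \<open>\<not> ?m < (?lam - 1) / ?lam\<close> by auto
  then have "AE x in \<mu>. x = ?m"
    using \<mu>.AE_eq_expectation_if_second_moment[OF int_x int_x2] by (simp add: s_def)
  moreover have "?m \<in> {0<..<1}"
    using m lam by (simp add: divide_less_eq)
  ultimately have "measure \<mu> {?m} = 1"
    using \<mu>.prob_eq_1[of "{?m}"] PF_invariantD(2)[OF assms(1)] by (simp add: sets_restrict_space_iff)
  with PF_invariant_no_point_mass[OF assms(1) \<open>?m \<in> {0<..<1}\<close>] show False
    by blast
qed

end

lemma logistic_noiseI:
  assumes "integrable lborel g" "\<And>l. 0 \<le> g l" "(\<integral>l. g l \<partial>lborel) = 1"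
    and "\<And>l. l \<notin> {0..4} \<Longrightarrow> g l = 0"
  shows "logistic_noise g"
  using borel_measurable_integrable[OF assms(1)] prob_space_noise_measure[OF assms] assms(2)
  by (simp add: logistic_noise_def)

theorem theorem1:
  fixes g :: "real \<Rightarrow> real" and \<mu> :: "real measure"
  assumes g_cont: "continuous_on UNIV g"
    and g_nonneg: "\<And>l. g l \<ge> 0"
    and g_int: "integrable lborel g"
    and g_prob: "(\<integral>l. g l \<partial>lborel) = 1"
    and g_supp: "closure {l. g l \<noteq> 0} \<subseteq> {1<..<3}"
    and inv: "PF_invariant g \<mu>"
  shows "(\<integral>x. x \<partial>\<mu>) <
           ((LINT l:{0..4}|lborel. l * g l) - 1) / (LINT l:{0..4}|lborel. l * g l)"
proof -
  have support: "l \<in> {1<..<3}" if "g l \<noteq> 0" for l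
    using that g_supp closure_subset[of "{l. g l \<noteq> 0}"] by blast
  interpret logistic_noise g
    using support by (intro logistic_noiseI[OF g_int g_nonneg g_prob]) force
  have "(LINT l:{0..4}|lborel. l * g l) = (\<integral>l. l \<partial>noise_measure g)"
    by (rule integral_noise_measure[OF borel_measurable_integrable[OF integrable_noise_identity]])
  moreover have "1 < (\<integral>l. l \<partial>noise_measure g)"
    using support by (intro noise_mean_gt_1) auto
  ultimately show ?thesis
    using PF_invariant_mean_less[OF inv] by simp
qed

end
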